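(* Let $(X,\rho)$ be a complete, separable metric space, let $\omega:[0,+\infty)\to[0,+\infty)$ be a continuous, concave, nonzero and nondecreasing function with $\omega(0)=0$, and let $\Theta=\{\theta_n\}_{n=1}^\infty$ be dense in $X$. Define $d_\Theta:\mathcal{C}_\omega(X)\times\mathcal{C}_\omega(X)\to\mathbb{R}$ by $d_\Theta(f,g)=\sum_{n=1}^\infty 2^{-n}\min\{1,\rho(f(\theta_n),g(\theta_n))\}$. Then $d_\Theta$ is a complete metric on $\mathcal{C}_\omega(X)$. Moreover, a sequence $(f_k)_{k=1}^\infty$ in $\mathcal{C}_\omega(X)$ converges to $f\in\mathcal{C}_\omega(X)$ with respect to $d_\Theta$ if and only if $f_k(x)\to f(x)$ for every $x\in X$ as $k\to\infty$.
   Context: For $f:X\to X$, the modulus of continuity is $\omega_f(s)=\sup\{\rho(f(x),f(y)): x,y\in X,\ \rho(x,y)\le s\}$ for $s\ge0$; $\mathcal{C}_\omega(X)$ is the set of all maps $f:X\to X$ with $\omega_f(s)\le\omega(s)$ for all $s\ge0$. *)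

theory Defs
  imports "HOL-Analysis.Analysis"
begin

text \<open>Modulus of continuity, as an extended real (the supremum may be infinite).\<close>
definition mod_cont :: "('a::metric_space \<Rightarrow> 'a) \<Rightarrow> real \<Rightarrow> ereal" where
  "mod_cont f s = (SUP p \<in> {(x, y). dist x y \<le> s}. ereal (dist (f (fst p)) (f (snd p))))"

definition C_omega :: "(real \<Rightarrow> real) \<Rightarrow> ('a::metric_space \<Rightarrow> 'a) set" where
  "C_omega \<omega> = {f. \<forall>s\<ge>0. mod_cont f s \<le> ereal (\<omega> s)}"

text \<open>The metric d_Theta; the dense sequence is indexed by n \<ge> 1.\<close>
definition d_Theta :: "(nat \<Rightarrow> 'a::metric_space) \<Rightarrow> ('a \<Rightarrow> 'a) \<Rightarrow> ('a \<Rightarrow> 'a) \<Rightarrow> real" where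
  "d_Theta \<theta> f g = (\<Sum>n. (1/2) ^ (Suc n) * min 1 (dist (f (\<theta> (Suc n))) (g (\<theta> (Suc n)))))"

end

theory Submission
  imports Defs
begin

text \<open>Since the weights \<open>2\<^sup>-\<^sup>n\<close> are summable and each term is at most
  \<open>min 1 \<rho>(f \<theta>\<^sub>n, g \<theta>\<^sub>n)\<close>, convergence and Cauchyness for \<open>d\<^sub>\<Theta>\<close> are the same as pointwise
  convergence and Cauchyness along the sequence \<open>\<Theta>\<close> (Tannery's theorem gives one direction).
  The bound \<open>\<rho>(f x, f y) \<le> \<omega>(\<rho>(x, y))\<close> with \<open>\<omega>\<close> continuous at \<open>0\<close> makes \<open>\<C>\<^sub>\<omega>(X)\<close>
  uniformly equicontinuous, so an \<open>\<epsilon>/3\<close> argument spreads both properties from the dense set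
  \<open>\<Theta>\<close> to all of \<open>X\<close>. For completeness, \<open>X\<close> provides a pointwise limit, and the bound by
  \<open>\<omega>\<close> survives pointwise limits; monotonicity of \<open>\<omega>\<close> turns it back into the bound on the
  modulus of continuity.\<close>

definition uniformly_equicontinuous :: "('a::metric_space \<Rightarrow> 'b::metric_space) set \<Rightarrow> bool" where
  "uniformly_equicontinuous F \<longleftrightarrow>
     (\<forall>e>0. \<exists>\<delta>>0. \<forall>f\<in>F. \<forall>x y. dist x y < \<delta> \<longrightarrow> dist (f x) (f y) < e)"

lemma uniformly_equicontinuousE:
  assumes "uniformly_equicontinuous F" "e > 0"
  obtains \<delta> where "\<delta> > 0" "\<And>f x y. f \<in> F \<Longrightarrow> dist x y < \<delta> \<Longrightarrow> dist (f x) (f y) < e"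
  using assms unfolding uniformly_equicontinuous_def by metis

lemma tendsto_pointwise_if_tendsto_on_dense:
  assumes equi: "uniformly_equicontinuous F" and F: "range fk \<subseteq> F" "f \<in> F"
    and dense: "closure (range \<theta>) = UNIV"
    and lim: "\<And>n. (\<lambda>k. fk k (\<theta> n)) \<longlonglongrightarrow> f (\<theta> n)"
  shows "(\<lambda>k. fk k x) \<longlonglongrightarrow> f x"
proof (rule tendstoI)
  fix e :: real assume "e > 0"
  then obtain \<delta> where "\<delta> > 0" and \<delta>: "\<And>g x y. g \<in> F \<Longrightarrow> dist x y < \<delta> \<Longrightarrow> dist (g x) (g y) < e/3"
    using equi uniformly_equicontinuousE[of F "e/3"] by auto
  obtain n where near: "dist x (\<theta> n) < \<delta>"
    using closure_approachableD[of x "range \<theta>" \<delta>] dense \<open>\<delta> > 0\<close> by auto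
  have "\<forall>\<^sub>F k in sequentially. dist (fk k (\<theta> n)) (f (\<theta> n)) < e/3"
    using lim \<open>e > 0\<close> by (intro tendstoD) auto
  then show "\<forall>\<^sub>F k in sequentially. dist (fk k x) (f x) < e"
  proof (rule eventually_mono)
    fix k assume "dist (fk k (\<theta> n)) (f (\<theta> n)) < e/3"
    moreover have "dist (fk k x) (fk k (\<theta> n)) < e/3" "dist (f (\<theta> n)) (f x) < e/3"
      using \<delta>[OF _ near] F by (auto simp: dist_commute)
    ultimately show "dist (fk k x) (f x) < e" by (metis dist_triangle_third)
  qed
qed

lemma Cauchy_pointwise_if_Cauchy_on_dense:
  assumes equi: "uniformly_equicontinuous F" and F: "range fk \<subseteq> F"
    and dense: "closure (range \<theta>) = UNIV"
    and cauchy: "\<And>n. Cauchy (\<lambda>k. fk k (\<theta> n))"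
  shows "Cauchy (\<lambda>k. fk k x)"
  unfolding Cauchy_def
proof (intro allI impI)
  fix e :: real assume "e > 0"
  then obtain \<delta> where "\<delta> > 0" and \<delta>: "\<And>g x y. g \<in> F \<Longrightarrow> dist x y < \<delta> \<Longrightarrow> dist (g x) (g y) < e/3"
    using equi uniformly_equicontinuousE[of F "e/3"] by auto
  obtain n where near: "dist x (\<theta> n) < \<delta>"
    using closure_approachableD[of x "range \<theta>" \<delta>] dense \<open>\<delta> > 0\<close> by auto
  obtain M where M: "\<And>k j. k \<ge> M \<Longrightarrow> j \<ge> M \<Longrightarrow> dist (fk k (\<theta> n)) (fk j (\<theta> n)) < e/3"
    using cauchy[of n] \<open>e > 0\<close> unfolding Cauchy_def by (meson divide_pos_pos zero_less_numeral)
  have "dist (fk k x) (fk j x) < e" if "k \<ge> M" "j \<ge> M" for k j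
  proof (rule dist_triangle_third)
    show "dist (fk k x) (fk k (\<theta> n)) < e/3" "dist (fk j (\<theta> n)) (fk j x) < e/3"
      using \<delta>[OF _ near] F by (auto simp: dist_commute)
  qed (use M that in auto)
  then show "\<exists>M. \<forall>k\<ge>M. \<forall>j\<ge>M. dist (fk k x) (fk j x) < e" by blast
qed

lemma range_Suc_dense_if_image_atLeast_1_dense:
  assumes "closure (\<theta> ` {1..}) = UNIV"
  shows "closure (range (\<lambda>n. \<theta> (Suc n))) = UNIV"
proof -
  have "\<theta> ` {1..} = range (\<lambda>n. \<theta> (Suc n))"
    by (auto simp: image_iff) (metis Suc_pred' less_eq_Suc_le One_nat_def)
  with assms show ?thesis by simp
qed

lemma C_omega_dist_le:
  assumes "f \<in> C_omega \<omega>"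
  shows "dist (f x) (f y) \<le> \<omega> (dist x y)"
proof -
  have "ereal (dist (f x) (f y)) \<le> mod_cont f (dist x y)"
    unfolding mod_cont_def by (rule SUP_upper2[of "(x, y)"]) auto
  also have "\<dots> \<le> ereal (\<omega> (dist x y))"
    using assms unfolding C_omega_def by auto
  finally show ?thesis by simp
qed

lemma mem_C_omega_iff:
  fixes f :: "'a::metric_space \<Rightarrow> 'a"
  assumes "mono_on {0..} \<omega>"
  shows "f \<in> C_omega \<omega> \<longleftrightarrow> (\<forall>x y. dist (f x) (f y) \<le> \<omega> (dist x y))"
proof
  assume "\<forall>x y. dist (f x) (f y) \<le> \<omega> (dist x y)"
  moreover have "\<omega> (dist x y) \<le> \<omega> s" if "dist x y \<le> s" for x y :: 'a and s
    using that by (intro mono_onD[OF assms]) (auto intro: order.trans[OF zero_le_dist])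
  ultimately have "dist (f x) (f y) \<le> \<omega> s" if "dist x y \<le> s" for x y :: 'a and s
    using that order_trans by blast
  then show "f \<in> C_omega \<omega>"
    unfolding C_omega_def mod_cont_def by (auto intro!: SUP_least)
qed (use C_omega_dist_le in blast)

lemma uniformly_equicontinuous_C_omega:
  assumes "continuous_on {0..} \<omega>" "\<omega> 0 = 0"
  shows "uniformly_equicontinuous (C_omega \<omega>)"
  unfolding uniformly_equicontinuous_def
proof (intro allI impI)
  fix e :: real assume "e > 0"
  then obtain \<delta> where "\<delta> > 0" and \<delta>: "\<And>t. t \<in> {0..} \<Longrightarrow> dist t 0 < \<delta> \<Longrightarrow> dist (\<omega> t) (\<omega> 0) < e"
    using assms(1) unfolding continuous_on_iff by (meson atLeast_iff order_refl)
  have "dist (f x) (f y) < e" if "f \<in> C_omega \<omega>" "dist x y < \<delta>" for f x y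
    using C_omega_dist_le[OF that(1), of x y] \<delta>[of "dist x y"] that(2) assms(2)
    by (simp add: dist_real_def)
  with \<open>\<delta> > 0\<close> show "\<exists>\<delta>>0. \<forall>f\<in>C_omega \<omega>. \<forall>x y. dist x y < \<delta> \<longrightarrow> dist (f x) (f y) < e"
    by blast
qed

lemma summable_d_Theta:
  "summable (\<lambda>n. (1/2::real) ^ Suc n * min 1 (dist (f (\<theta> (Suc n))) (g (\<theta> (Suc n)))))"
proof (rule summable_comparison_test)
  show "summable (\<lambda>n. (1/2::real) ^ Suc n)" by simp
qed auto

lemma d_Theta_nonneg: "0 \<le> d_Theta \<theta> f g"
  unfolding d_Theta_def by (rule suminf_nonneg[OF summable_d_Theta]) auto

lemma d_Theta_self: "d_Theta \<theta> f f = 0"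
  by (simp add: d_Theta_def)

lemma d_Theta_commute: "d_Theta \<theta> f g = d_Theta \<theta> g f"
  by (simp add: d_Theta_def dist_commute)

lemma min_1_dist_triangle: "min 1 (dist x z) \<le> min 1 (dist x y) + min 1 (dist y z)"
  using dist_triangle[of x z y] zero_le_dist[of x y] zero_le_dist[of y z] by linarith

lemma d_Theta_triangle: "d_Theta \<theta> f h \<le> d_Theta \<theta> f g + d_Theta \<theta> g h"
  unfolding d_Theta_def suminf_add[OF summable_d_Theta summable_d_Theta]
  by (intro suminf_le summable_add summable_d_Theta)
    (simp add: distrib_left[symmetric] mult_left_mono min_1_dist_triangle)

lemma dist_less_if_d_Theta_less:
  assumes "d_Theta \<theta> f g < (1/2) ^ Suc n * e" "e \<le> 1"
  shows "dist (f (\<theta> (Suc n))) (g (\<theta> (Suc n))) < e"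
proof -
  have "(1/2) ^ Suc n * min 1 (dist (f (\<theta> (Suc n))) (g (\<theta> (Suc n)))) \<le> d_Theta \<theta> f g"
    unfolding d_Theta_def using sum_le_suminf[OF summable_d_Theta, of "{n}"] by auto
  with assms(1) have "min 1 (dist (f (\<theta> (Suc n))) (g (\<theta> (Suc n)))) < e"
    by (metis le_less_trans mult_less_cancel_left_pos zero_less_divide_1_iff zero_less_numeral
      zero_less_power)
  with assms(2) show ?thesis by linarith
qed

lemma tendsto_d_Theta_iff:
  "(\<lambda>k. d_Theta \<theta> (fk k) f) \<longlonglongrightarrow> 0 \<longleftrightarrow> (\<forall>n. (\<lambda>k. fk k (\<theta> (Suc n))) \<longlonglongrightarrow> f (\<theta> (Suc n)))"
proof
  assume d: "(\<lambda>k. d_Theta \<theta> (fk k) f) \<longlonglongrightarrow> 0"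
  show "\<forall>n. (\<lambda>k. fk k (\<theta> (Suc n))) \<longlonglongrightarrow> f (\<theta> (Suc n))"
  proof (intro allI tendstoI)
    fix n and e :: real assume "e > 0"
    then have "\<forall>\<^sub>F k in sequentially. d_Theta \<theta> (fk k) f < (1/2) ^ Suc n * min e 1"
      using d by (intro order_tendstoD(2)) auto
    then show "\<forall>\<^sub>F k in sequentially. dist (fk k (\<theta> (Suc n))) (f (\<theta> (Suc n))) < e"
    proof (rule eventually_mono)
      fix k assume "d_Theta \<theta> (fk k) f < (1/2) ^ Suc n * min e 1"
      then have "dist (fk k (\<theta> (Suc n))) (f (\<theta> (Suc n))) < min e 1"
        by (rule dist_less_if_d_Theta_less) simp
      then show "dist (fk k (\<theta> (Suc n))) (f (\<theta> (Suc n))) < e" by simp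
    qed
  qed
next
  assume lim: "\<forall>n. (\<lambda>k. fk k (\<theta> (Suc n))) \<longlonglongrightarrow> f (\<theta> (Suc n))"
  define a where "a n k = (1/2::real) ^ Suc n * min 1 (dist (fk k (\<theta> (Suc n))) (f (\<theta> (Suc n))))"
    for n k
  have "(\<lambda>k. a n k) \<longlonglongrightarrow> (1/2) ^ Suc n * min 1 0" for n
    unfolding a_def
    by (intro tendsto_mult_left tendsto_min tendsto_const) (use lim in \<open>simp flip: tendsto_dist_iff\<close>)
  then have a_lim: "(\<lambda>k. a n k) \<longlonglongrightarrow> 0" for n by simp
  have a_bound: "\<forall>\<^sub>F (n, k) in at_top \<times>\<^sub>F sequentially. norm (a n k) \<le> (1/2) ^ Suc n"
    by (intro always_eventually) (auto simp: a_def)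
  have "summable (\<lambda>n. (1/2::real) ^ Suc n)" by simp
  from tannerys_theorem[OF a_lim a_bound this sequentially_bot]
  have "(\<lambda>k. \<Sum>n. a n k) \<longlonglongrightarrow> 0" by simp
  then show "(\<lambda>k. d_Theta \<theta> (fk k) f) \<longlonglongrightarrow> 0"
    by (simp add: d_Theta_def a_def)
qed

lemma Cauchy_at_theta_if_d_Theta_Cauchy:
  assumes "\<forall>e>0. \<exists>N. \<forall>k j. N \<le> k \<longrightarrow> N \<le> j \<longrightarrow> d_Theta \<theta> (fk k) (fk j) < e"
  shows "Cauchy (\<lambda>k. fk k (\<theta> (Suc n)))"
  unfolding Cauchy_def
proof (intro allI impI)
  fix e :: real assume "e > 0"
  then have "(1/2) ^ Suc n * min e 1 > 0" by simp
  then obtain N where N: "\<And>k j. N \<le> k \<Longrightarrow> N \<le> j \<Longrightarrow> d_Theta \<theta> (fk k) (fk j) < (1/2) ^ Suc n * min e 1"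
    using assms by blast
  have "dist (fk k (\<theta> (Suc n))) (fk j (\<theta> (Suc n))) < min e 1" if "N \<le> k" "N \<le> j" for k j
    using N[OF that] by (rule dist_less_if_d_Theta_less) simp
  then show "\<exists>N. \<forall>k\<ge>N. \<forall>j\<ge>N. dist (fk k (\<theta> (Suc n))) (fk j (\<theta> (Suc n))) < e"
    by fastforce
qed

lemma eq_if_d_Theta_eq_0:
  assumes cont: "continuous_on {0..} \<omega>" and zero: "\<omega> 0 = 0"
    and dense: "closure (range (\<lambda>n. \<theta> (Suc n))) = UNIV"
    and C: "f \<in> C_omega \<omega>" "g \<in> C_omega \<omega>" and d: "d_Theta \<theta> f g = 0"
  shows "f = g"
proof
  fix x
  have "(\<lambda>k. f (\<theta> (Suc n))) \<longlonglongrightarrow> g (\<theta> (Suc n))" for n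
    using tendsto_d_Theta_iff[of \<theta> "\<lambda>k. f" g] d by simp
  then have "(\<lambda>k. f x) \<longlonglongrightarrow> g x"
    using tendsto_pointwise_if_tendsto_on_dense[OF uniformly_equicontinuous_C_omega[OF cont zero]
      _ C(2) dense, where fk = "\<lambda>_. f"] C(1) by blast
  then show "f x = g x" by (simp add: LIMSEQ_const_iff)
qed

lemma Metric_space_d_Theta:
  assumes "continuous_on {0..} \<omega>" "\<omega> 0 = 0" "closure (range (\<lambda>n. \<theta> (Suc n))) = UNIV"
  shows "Metric_space (C_omega \<omega>) (d_Theta \<theta>)"
  by unfold_locales
    (auto simp: d_Theta_nonneg d_Theta_commute d_Theta_self d_Theta_triangle
      intro: eq_if_d_Theta_eq_0[OF assms])

lemma limitin_d_Theta_iff_pointwise: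
  assumes cont: "continuous_on {0..} \<omega>" and zero: "\<omega> 0 = 0"
    and dense: "closure (range (\<lambda>n. \<theta> (Suc n))) = UNIV"
    and C: "range fk \<subseteq> C_omega \<omega>" "f \<in> C_omega \<omega>"
  shows "limitin (Metric_space.mtopology (C_omega \<omega>) (d_Theta \<theta>)) fk f sequentially
    \<longleftrightarrow> (\<forall>x. (\<lambda>k. fk k x) \<longlonglongrightarrow> f x)"
proof -
  interpret M: Metric_space "C_omega \<omega>" "d_Theta \<theta>"
    by (rule Metric_space_d_Theta[OF cont zero dense])
  have "limitin M.mtopology fk f sequentially \<longleftrightarrow> (\<lambda>k. d_Theta \<theta> (fk k) f) \<longlonglongrightarrow> 0"
    using C by (simp add: M.limitin_metric_dist_null image_subset_iff always_eventually)
  also have "\<dots> \<longleftrightarrow> (\<forall>n. (\<lambda>k. fk k (\<theta> (Suc n))) \<longlonglongrightarrow> f (\<theta> (Suc n)))"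
    by (rule tendsto_d_Theta_iff)
  also have "\<dots> \<longleftrightarrow> (\<forall>x. (\<lambda>k. fk k x) \<longlonglongrightarrow> f x)"
    using tendsto_pointwise_if_tendsto_on_dense[OF uniformly_equicontinuous_C_omega[OF cont zero]
      C dense] by blast
  finally show ?thesis .
qed

lemma mcomplete_d_Theta:
  fixes \<theta> :: "nat \<Rightarrow> 'a::complete_space"
  assumes cont: "continuous_on {0..} \<omega>" and zero: "\<omega> 0 = 0" and mono: "mono_on {0..} \<omega>"
    and dense: "closure (range (\<lambda>n. \<theta> (Suc n))) = UNIV"
  shows "Metric_space.mcomplete (C_omega \<omega>) (d_Theta \<theta>)"
proof -
  interpret M: Metric_space "C_omega \<omega>" "d_Theta \<theta>"
    by (rule Metric_space_d_Theta[OF cont zero dense])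
  show ?thesis
    unfolding M.mcomplete_def
  proof (intro allI impI)
    fix \<sigma> assume "M.MCauchy \<sigma>"
    then have C: "range \<sigma> \<subseteq> C_omega \<omega>"
      and cauchy: "\<forall>e>0. \<exists>N. \<forall>k j. N \<le> k \<longrightarrow> N \<le> j \<longrightarrow> d_Theta \<theta> (\<sigma> k) (\<sigma> j) < e"
      unfolding M.MCauchy_def by auto
    have "Cauchy (\<lambda>k. \<sigma> k x)" for x
      using Cauchy_pointwise_if_Cauchy_on_dense[OF uniformly_equicontinuous_C_omega[OF cont zero]
        C dense]
        Cauchy_at_theta_if_d_Theta_Cauchy[OF cauchy] by blast
    then obtain f where lim: "\<And>x. (\<lambda>k. \<sigma> k x) \<longlonglongrightarrow> f x"
      unfolding Cauchy_convergent_iff convergent_def by metis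
    have "dist (f x) (f y) \<le> \<omega> (dist x y)" for x y
    proof (rule LIMSEQ_le_const2)
      show "(\<lambda>k. dist (\<sigma> k x) (\<sigma> k y)) \<longlonglongrightarrow> dist (f x) (f y)"
        by (rule tendsto_dist[OF lim lim])
      show "\<exists>N. \<forall>k\<ge>N. dist (\<sigma> k x) (\<sigma> k y) \<le> \<omega> (dist x y)"
        using C C_omega_dist_le by blast
    qed
    then have "f \<in> C_omega \<omega>"
      by (simp add: mem_C_omega_iff[OF mono])
    with C lim show "\<exists>f. limitin M.mtopology \<sigma> f sequentially"
      using limitin_d_Theta_iff_pointwise[OF cont zero dense] by blast
  qed
qed

theorem proposition5p1:
  fixes \<omega> :: "real \<Rightarrow> real" and \<theta> :: "nat \<Rightarrow> 'a::complete_space"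
  assumes sep: "\<exists>D::'a set. countable D \<and> closure D = UNIV"
    and nonneg: "\<forall>s\<ge>0. \<omega> s \<ge> 0"
    and cont: "continuous_on {0..} \<omega>"
    and conc: "concave_on {0..} \<omega>"
    and nonzero: "\<exists>s\<ge>0. \<omega> s \<noteq> 0"
    and mono: "mono_on {0..} \<omega>"
    and zero: "\<omega> 0 = 0"
    and dense: "closure (\<theta> ` {1..}) = UNIV"
  shows "Metric_space (C_omega \<omega>) (d_Theta \<theta>)
    \<and> Metric_space.mcomplete (C_omega \<omega>) (d_Theta \<theta>)
    \<and> (\<forall>fk f. (\<forall>k. fk k \<in> C_omega \<omega>) \<longrightarrow> f \<in> C_omega \<omega> \<longrightarrow>
        (limitin (Metric_space.mtopology (C_omega \<omega>) (d_Theta \<theta>)) fk f sequentially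
          \<longleftrightarrow> (\<forall>x. (\<lambda>k. fk k x) \<longlonglongrightarrow> f x)))"
  \<comment> \<open>Separability already follows from \<open>dense\<close>.\<close>
proof -
  have dense_Suc: "closure (range (\<lambda>n. \<theta> (Suc n))) = UNIV"
    by (rule range_Suc_dense_if_image_atLeast_1_dense[OF dense])
  show ?thesis
    using Metric_space_d_Theta[OF cont zero dense_Suc] mcomplete_d_Theta[OF cont zero mono dense_Suc]
      limitin_d_Theta_iff_pointwise[OF cont zero dense_Suc]
    by (simp add: image_subset_iff)
qed

end
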